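(* Let $X,Y$ be metric spaces with bounded geometry, and equip $X\times Y$ with the $\ell^\infty$ product metric. For every $q,q'\geq 1$, $\mathrm{TO}^{q+q'}_{X\times Y}(r) \lesssim \mathrm{TO}^q_X(r)\,\mathrm{TO}^{q'}_Y(r)$.
   Context: A metric space has bounded geometry if for every $R\ge r>0$ there is $C(R,r)$ such that every ball of radius $R$ is covered by $C(R,r)$ balls of radius $r$. For $Z\subseteq X$, $\mathrm{Cov}^1(Z)$ is the minimal number of closed balls of radius $1$ in $X$ covering $Z$ ($+\infty$ if none). For $Z$ with $\mathrm{Cov}^1(Z)<\infty$ and continuous $f:Z\to\mathbb R^q$, $\mathrm{Ov}(f)=\sup_{z}\mathrm{Cov}^1(f^{-1}(z))$, $\mathrm{TO}^q(Z)=\min_f\mathrm{Ov}(f)$, $\mathrm{TO}^q_X(r)=\max\{\mathrm{TO}^q(Z): Z\subseteq X,\mathrm{Cov}^1(Z)\le r\}$. $f\lesssim g$ means there is $C$ with $f(r)\le Cg(Cr)+C$ for all $r$. (The paper notes that changing to any $\ell^p$ product metric does not change $\mathrm{TO}$ up to $\simeq$.) *)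

theory Defs
  imports "HOL-Analysis.Analysis"
begin

definition bounded_geometry :: "'a set \<Rightarrow> ('a \<Rightarrow> 'a \<Rightarrow> real) \<Rightarrow> bool" where
  "bounded_geometry M d \<longleftrightarrow>
     (\<forall>R r. 0 < r \<and> r \<le> R \<longrightarrow>
        (\<exists>N::nat. \<forall>x\<in>M. \<exists>C. finite C \<and> C \<subseteq> M \<and> card C \<le> N \<and>
            Metric_space.mcball M d x R \<subseteq> (\<Union>c\<in>C. Metric_space.mcball M d c r)))"

text \<open>Cov^1(Z): minimal number of closed radius-1 balls of X covering Z (infinity if none).\<close>
definition Cov1 :: "'a set \<Rightarrow> ('a \<Rightarrow> 'a \<Rightarrow> real) \<Rightarrow> 'a set \<Rightarrow> enat" where
  "Cov1 M d Z = Inf {enat (card C) | C. finite C \<and> C \<subseteq> M \<and>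
       Z \<subseteq> (\<Union>c\<in>C. Metric_space.mcball M d c 1)}"

definition Ov :: "'a set \<Rightarrow> ('a \<Rightarrow> 'a \<Rightarrow> real) \<Rightarrow> 'a set \<Rightarrow> ('a \<Rightarrow> real^'q::finite) \<Rightarrow> enat" where
  "Ov M d Z f = (SUP z\<in>(UNIV :: (real^'q) set). Cov1 M d {x\<in>Z. f x = z})"

text \<open>TO^q(Z): minimum of Ov(f) over continuous f : Z \<rightarrow> R^q (the dimension q is CARD('q)).\<close>
definition TO :: "'q::finite itself \<Rightarrow> 'a set \<Rightarrow> ('a \<Rightarrow> 'a \<Rightarrow> real) \<Rightarrow> 'a set \<Rightarrow> enat" where
  "TO _ M d Z = (INF f\<in>{f :: 'a \<Rightarrow> real^'q.
        continuous_map (subtopology (Metric_space.mtopology M d) Z) euclidean f}. Ov M d Z f)"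

definition TO_fun :: "'q::finite itself \<Rightarrow> 'a set \<Rightarrow> ('a \<Rightarrow> 'a \<Rightarrow> real) \<Rightarrow> real \<Rightarrow> enat" where
  "TO_fun q M d r = (SUP Z\<in>{Z. Z \<subseteq> M \<and> ereal_of_enat (Cov1 M d Z) \<le> ereal r}. TO q M d Z)"

definition max_dist :: "('a \<Rightarrow> 'a \<Rightarrow> real) \<Rightarrow> ('b \<Rightarrow> 'b \<Rightarrow> real) \<Rightarrow> ('a \<times> 'b) \<Rightarrow> ('a \<times> 'b) \<Rightarrow> real" where
  "max_dist d1 d2 = (\<lambda>(x,y) (x',y'). max (d1 x x') (d2 y y'))"

definition lesssim :: "(real \<Rightarrow> ereal) \<Rightarrow> (real \<Rightarrow> ereal) \<Rightarrow> bool" where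
  "lesssim f g \<longleftrightarrow> (\<exists>C::real. C > 0 \<and> (\<forall>r. f r \<le> ereal C * g (C * r) + ereal C))"

end

theory Submission
  imports Defs
begin

text \<open>Given \<open>Z \<subseteq> X \<times> Y\<close>, take optimal maps \<open>f\<close> on the projection of \<open>Z\<close> to \<open>X\<close> and \<open>g\<close> on
  its projection to \<open>Y\<close>, and map \<open>(x, y)\<close> to the concatenation \<open>(f x, g y) \<in> \<real>\<^sup>q\<^sup>+\<^sup>q\<^sup>'\<close>. Each
  fibre of this map lies in a product of a fibre of \<open>f\<close> and a fibre of \<open>g\<close>, and in the
  \<open>\<ell>\<^sup>\<infinity>\<close> metric a unit ball of \<open>X \<times> Y\<close> is a product of unit balls, so
  \<open>Cov\<^sup>1(A \<times> B) \<le> Cov\<^sup>1(A) Cov\<^sup>1(B)\<close>. Projections do not increase distances, hence neither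
  continuity nor the bound \<open>Cov\<^sup>1 \<le> r\<close> is lost. This gives the inequality pointwise, with
  constant \<open>1\<close>.\<close>

lemma Metric_space_max_dist:
  assumes "Metric_space MX dX" and "Metric_space MY dY"
  shows "Metric_space (MX \<times> MY) (max_dist dX dY)"
proof -
  interpret X: Metric_space MX dX by fact
  interpret Y: Metric_space MY dY by fact
  show ?thesis
  proof
    fix p q
    assume "p \<in> MX \<times> MY" "q \<in> MX \<times> MY"
    then show "max_dist dX dY p q = 0 \<longleftrightarrow> p = q"
      unfolding max_dist_def
      by (auto split: prod.splits) (metis X.nonneg X.zero Y.nonneg Y.zero max.absorb1 max.absorb2 nle_le)+
  next
    fix p q r
    assume "p \<in> MX \<times> MY" "q \<in> MX \<times> MY" "r \<in> MX \<times> MY"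
    then show "max_dist dX dY p r \<le> max_dist dX dY p q + max_dist dX dY q r"
      unfolding max_dist_def
      by (auto split: prod.splits) (smt (verit) X.nonneg Y.nonneg X.triangle Y.triangle)+
  qed (auto simp: max_dist_def X.commute Y.commute max.coboundedI1)
qed

lemma mcball_max_dist:
  assumes "Metric_space MX dX" and "Metric_space MY dY"
  shows "Metric_space.mcball (MX \<times> MY) (max_dist dX dY) (x, y) r
     = Metric_space.mcball MX dX x r \<times> Metric_space.mcball MY dY y r"
  using assms Metric_space_max_dist[OF assms]
  by (auto simp: Metric_space.in_mcball max_dist_def)

definition nonexpansive ::
    "'a set \<Rightarrow> ('a \<Rightarrow> 'a \<Rightarrow> real) \<Rightarrow> 'b set \<Rightarrow> ('b \<Rightarrow> 'b \<Rightarrow> real) \<Rightarrow> ('a \<Rightarrow> 'b) \<Rightarrow> bool" where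
  "nonexpansive M d M' d' h \<longleftrightarrow> h ` M \<subseteq> M' \<and> (\<forall>x\<in>M. \<forall>y\<in>M. d' (h x) (h y) \<le> d x y)"

lemma nonexpansive_fst_max_dist: "nonexpansive (MX \<times> MY) (max_dist dX dY) MX dX fst"
  by (auto simp: nonexpansive_def max_dist_def)

lemma nonexpansive_snd_max_dist: "nonexpansive (MX \<times> MY) (max_dist dX dY) MY dY snd"
  by (auto simp: nonexpansive_def max_dist_def)

lemma continuous_map_nonexpansive:
  assumes "Metric_space M d" and "Metric_space M' d'" and "nonexpansive M d M' d' h"
  shows "continuous_map (Metric_space.mtopology M d) (Metric_space.mtopology M' d') h"
  unfolding Metric_space.metric_continuous_map[OF assms(1,2)]
  using assms(3) unfolding nonexpansive_def by force

lemma Cov1_mono: "Z \<subseteq> Z' \<Longrightarrow> Cov1 M d Z \<le> Cov1 M d Z'"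
  unfolding Cov1_def by (rule Inf_superset_mono) blast

lemma Cov1_le_card:
  assumes "finite C" and "C \<subseteq> M" and "Z \<subseteq> (\<Union>c\<in>C. Metric_space.mcball M d c 1)"
  shows "Cov1 M d Z \<le> enat (card C)"
  unfolding Cov1_def using assms by (blast intro: Inf_lower)

lemma Cov1_attained:
  assumes "Cov1 M d Z \<noteq> \<infinity>"
  obtains C where "finite C" and "C \<subseteq> M" and "Z \<subseteq> (\<Union>c\<in>C. Metric_space.mcball M d c 1)"
    and "Cov1 M d Z = enat (card C)"
proof -
  let ?S = "{enat (card C) | C. finite C \<and> C \<subseteq> M \<and> Z \<subseteq> (\<Union>c\<in>C. Metric_space.mcball M d c 1)}"
  have "?S \<noteq> {}"
    using assms unfolding Cov1_def by (metis Inf_empty top_enat_def)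
  then obtain k where "k \<in> ?S"
    by blast
  then have "Inf ?S \<in> ?S"
    by (rule wellorder_InfI)
  then obtain C where C: "Inf ?S = enat (card C)" "finite C" "C \<subseteq> M"
    "Z \<subseteq> (\<Union>c\<in>C. Metric_space.mcball M d c 1)"
    by blast
  show ?thesis
    using C by (intro that) (simp_all add: Cov1_def)
qed

lemma Cov1_eq_0_iff: "Cov1 M d Z = 0 \<longleftrightarrow> Z = {}"
proof
  assume "Cov1 M d Z = 0"
  then obtain C where "Z \<subseteq> (\<Union>c\<in>C. Metric_space.mcball M d c 1)" "enat (card C) = 0" "finite C"
    by (metis Cov1_attained zero_enat_def infinity_ne_i0)
  then show "Z = {}"
    by (simp add: zero_enat_def)
next
  assume "Z = {}"
  then show "Cov1 M d Z = 0"
    using Cov1_le_card[of "{}" M Z d] by (simp add: enat_0)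
qed

lemma Cov1_image_nonexpansive:
  assumes "Metric_space M d" and "Metric_space M' d'" and "nonexpansive M d M' d' h"
  shows "Cov1 M' d' (h ` Z) \<le> Cov1 M d Z"
proof (cases "Cov1 M d Z = \<infinity>")
  case False
  then obtain C where C: "finite C" "C \<subseteq> M" "Z \<subseteq> (\<Union>c\<in>C. Metric_space.mcball M d c 1)"
    and eq: "Cov1 M d Z = enat (card C)"
    by (rule Cov1_attained)
  have "h ` Z \<subseteq> (\<Union>c\<in>h ` C. Metric_space.mcball M' d' c 1)"
  proof
    fix y
    assume "y \<in> h ` Z"
    then obtain z c where "y = h z" "c \<in> C" "z \<in> Metric_space.mcball M d c 1"
      using C(3) by blast
    moreover from this have "h z \<in> Metric_space.mcball M' d' (h c) 1"
      using assms by (force simp: Metric_space.in_mcball nonexpansive_def intro: order_trans)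
    ultimately show "y \<in> (\<Union>c\<in>h ` C. Metric_space.mcball M' d' c 1)"
      by blast
  qed
  moreover have "h ` C \<subseteq> M'"
    using C(2) assms(3) unfolding nonexpansive_def by blast
  ultimately have "Cov1 M' d' (h ` Z) \<le> enat (card (h ` C))"
    using C(1) by (intro Cov1_le_card) auto
  also have "\<dots> \<le> Cov1 M d Z"
    using eq C(1) by (simp add: card_image_le)
  finally show ?thesis .
qed simp

lemma Cov1_Times_max_dist_le:
  assumes "Metric_space MX dX" and "Metric_space MY dY"
  shows "Cov1 (MX \<times> MY) (max_dist dX dY) (A \<times> B) \<le> Cov1 MX dX A * Cov1 MY dY B"
proof (cases "A = {} \<or> B = {}")
  case True
  then show ?thesis
    by (metis Cov1_eq_0_iff Times_empty zero_le)
next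
  case False
  then have nonzero: "Cov1 MX dX A \<noteq> 0" "Cov1 MY dY B \<noteq> 0"
    by (simp_all add: Cov1_eq_0_iff)
  show ?thesis
  proof (cases "Cov1 MX dX A = \<infinity> \<or> Cov1 MY dY B = \<infinity>")
    case True
    then have "Cov1 MX dX A * Cov1 MY dY B = \<infinity>"
      using nonzero by (auto simp: imult_is_infinity)
    then show ?thesis
      by simp
  next
    case False
    then obtain CA CB where
      CA: "finite CA" "CA \<subseteq> MX" "A \<subseteq> (\<Union>c\<in>CA. Metric_space.mcball MX dX c 1)"
        "Cov1 MX dX A = enat (card CA)" and
      CB: "finite CB" "CB \<subseteq> MY" "B \<subseteq> (\<Union>c\<in>CB. Metric_space.mcball MY dY c 1)"
        "Cov1 MY dY B = enat (card CB)"
      by (metis Cov1_attained)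
    have "A \<times> B \<subseteq> (\<Union>c\<in>CA \<times> CB. Metric_space.mcball (MX \<times> MY) (max_dist dX dY) c 1)"
      using CA(3) CB(3) by (force simp: mcball_max_dist[OF assms])
    then have "Cov1 (MX \<times> MY) (max_dist dX dY) (A \<times> B) \<le> enat (card (CA \<times> CB))"
      using CA CB by (intro Cov1_le_card) auto
    also have "\<dots> = Cov1 MX dX A * Cov1 MY dY B"
      using CA(4) CB(4) by (simp add: card_cartesian_product)
    finally show ?thesis .
  qed
qed

definition vec_join :: "real^'m \<Rightarrow> real^'n \<Rightarrow> real^('m + 'n)" where
  "vec_join a b = (\<chi> i. case i of Inl j \<Rightarrow> a $ j | Inr k \<Rightarrow> b $ k)"

lemma vec_join_eq_iff:
  "vec_join a b = v \<longleftrightarrow> a = (\<chi> j. v $ Inl j) \<and> b = (\<chi> k. v $ Inr k)"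
  by (auto simp: vec_join_def vec_eq_iff split: sum.split)

lemma continuous_map_vec_join [continuous_intros]:
  fixes f :: "'a \<Rightarrow> real^'m::finite" and g :: "'a \<Rightarrow> real^'n::finite"
  assumes "continuous_map T euclidean f" and "continuous_map T euclidean g"
  shows "continuous_map T euclidean (\<lambda>x. vec_join (f x) (g x))"
proof -
  have paired: "continuous_map T euclidean (\<lambda>x. (f x, g x))"
    using continuous_map_pairedI[OF assms] by simp
  have "continuous_on UNIV (\<lambda>p :: (real^'m) \<times> (real^'n). vec_join (fst p) (snd p))"
    unfolding vec_join_def
  proof (intro continuous_on_vec_lambda)
    fix i :: "'m + 'n"
    show "continuous_on UNIV (\<lambda>p :: (real^'m) \<times> (real^'n).
        case i of Inl j \<Rightarrow> fst p $ j | Inr k \<Rightarrow> snd p $ k)"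
      by (cases i) (auto intro!: continuous_intros)
  qed
  then have "continuous_map euclidean euclidean
      (\<lambda>p :: (real^'m) \<times> (real^'n). vec_join (fst p) (snd p))"
    by simp
  from continuous_map_compose[OF paired this]
  show ?thesis
    by (simp add: o_def)
qed

lemma Ov_vec_join_le:
  fixes f :: "'a \<Rightarrow> real^'m::finite" and g :: "'b \<Rightarrow> real^'n::finite"
  assumes "Metric_space MX dX" and "Metric_space MY dY"
    and "fst ` Z \<subseteq> ZX" and "snd ` Z \<subseteq> ZY"
  shows "Ov (MX \<times> MY) (max_dist dX dY) Z (\<lambda>z. vec_join (f (fst z)) (g (snd z)))
    \<le> Ov MX dX ZX f * Ov MY dY ZY g"
  unfolding Ov_def[of _ _ Z]
proof (rule SUP_least)
  fix v :: "real^('m + 'n)"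
  let ?vX = "\<chi> j. v $ Inl j" and ?vY = "\<chi> k. v $ Inr k"
  have "{z \<in> Z. vec_join (f (fst z)) (g (snd z)) = v}
      \<subseteq> {x \<in> ZX. f x = ?vX} \<times> {y \<in> ZY. g y = ?vY}"
    using assms(3,4) by (auto simp: vec_join_eq_iff)
  then have "Cov1 (MX \<times> MY) (max_dist dX dY) {z \<in> Z. vec_join (f (fst z)) (g (snd z)) = v}
      \<le> Cov1 (MX \<times> MY) (max_dist dX dY) ({x \<in> ZX. f x = ?vX} \<times> {y \<in> ZY. g y = ?vY})"
    by (rule Cov1_mono)
  also have "\<dots> \<le> Cov1 MX dX {x \<in> ZX. f x = ?vX} * Cov1 MY dY {y \<in> ZY. g y = ?vY}"
    by (rule Cov1_Times_max_dist_le[OF assms(1,2)])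
  also have "\<dots> \<le> Ov MX dX ZX f * Ov MY dY ZY g"
    unfolding Ov_def by (intro mult_mono SUP_upper) auto
  finally show "Cov1 (MX \<times> MY) (max_dist dX dY) {z \<in> Z. vec_join (f (fst z)) (g (snd z)) = v}
      \<le> Ov MX dX ZX f * Ov MY dY ZY g" .
qed

lemma TO_attained:
  obtains f :: "'a \<Rightarrow> real^'q::finite"
  where "continuous_map (subtopology (Metric_space.mtopology M d) Z) euclidean f"
    and "Ov M d Z f = TO TYPE('q) M d Z"
proof -
  let ?F = "{f :: 'a \<Rightarrow> real^'q. continuous_map (subtopology (Metric_space.mtopology M d) Z) euclidean f}"
  have "(\<lambda>_. 0) \<in> ?F"
    by simp
  then have "Inf (Ov M d Z ` ?F) \<in> Ov M d Z ` ?F"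
    by (rule wellorder_InfI[OF imageI])
  then show ?thesis
    using that unfolding TO_def by force
qed

lemma TO_le_Ov:
  "continuous_map (subtopology (Metric_space.mtopology M d) Z) euclidean f
    \<Longrightarrow> TO TYPE('q::finite) M d Z \<le> Ov M d Z (f :: 'a \<Rightarrow> real^'q)"
  unfolding TO_def by (rule INF_lower) simp

lemma continuous_map_subtopology_nonexpansive:
  assumes "Metric_space M d" and "Metric_space M' d'" and "nonexpansive M d M' d' h"
  shows "continuous_map (subtopology (Metric_space.mtopology M d) Z)
      (subtopology (Metric_space.mtopology M' d') (h ` Z)) h"
  by (rule continuous_map_into_subtopology[OF continuous_map_from_subtopology])
    (auto intro: continuous_map_nonexpansive[OF assms])

lemma TO_max_dist_le:
  assumes "Metric_space MX dX" and "Metric_space MY dY"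
  shows "TO TYPE('q::finite + 'q'::finite) (MX \<times> MY) (max_dist dX dY) Z
    \<le> TO TYPE('q) MX dX (fst ` Z) * TO TYPE('q') MY dY (snd ` Z)"
proof -
  have MXY: "Metric_space (MX \<times> MY) (max_dist dX dY)"
    using Metric_space_max_dist[OF assms] .
  obtain f :: "'a \<Rightarrow> real^'q"
    where f: "continuous_map (subtopology (Metric_space.mtopology MX dX) (fst ` Z)) euclidean f"
      and Ov_f: "Ov MX dX (fst ` Z) f = TO TYPE('q) MX dX (fst ` Z)"
    by (rule TO_attained)
  obtain g :: "'b \<Rightarrow> real^'q'"
    where g: "continuous_map (subtopology (Metric_space.mtopology MY dY) (snd ` Z)) euclidean g"
      and Ov_g: "Ov MY dY (snd ` Z) g = TO TYPE('q') MY dY (snd ` Z)"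
    by (rule TO_attained)
  let ?T = "subtopology (Metric_space.mtopology (MX \<times> MY) (max_dist dX dY)) Z"
  have "continuous_map ?T euclidean (f \<circ> fst)"
    by (rule continuous_map_compose[OF
          continuous_map_subtopology_nonexpansive[OF MXY assms(1) nonexpansive_fst_max_dist] f])
  moreover have "continuous_map ?T euclidean (g \<circ> snd)"
    by (rule continuous_map_compose[OF
          continuous_map_subtopology_nonexpansive[OF MXY assms(2) nonexpansive_snd_max_dist] g])
  ultimately have "continuous_map ?T euclidean (\<lambda>z. vec_join (f (fst z)) (g (snd z)))"
    by (intro continuous_map_vec_join) (simp_all add: o_def)
  then have "TO TYPE('q + 'q') (MX \<times> MY) (max_dist dX dY) Z
      \<le> Ov (MX \<times> MY) (max_dist dX dY) Z (\<lambda>z. vec_join (f (fst z)) (g (snd z)))"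
    by (rule TO_le_Ov)
  also have "\<dots> \<le> Ov MX dX (fst ` Z) f * Ov MY dY (snd ` Z) g"
    by (rule Ov_vec_join_le[OF assms]) auto
  finally show ?thesis
    unfolding Ov_f Ov_g .
qed

lemma TO_fun_max_dist_le:
  assumes "Metric_space MX dX" and "Metric_space MY dY"
  shows "TO_fun TYPE('q::finite + 'q'::finite) (MX \<times> MY) (max_dist dX dY) r
     \<le> TO_fun TYPE('q) MX dX r * TO_fun TYPE('q') MY dY r"
  unfolding TO_fun_def[of "TYPE('q + 'q')"]
proof (rule SUP_least)
  fix Z
  assume Z: "Z \<in> {Z. Z \<subseteq> MX \<times> MY \<and> ereal_of_enat (Cov1 (MX \<times> MY) (max_dist dX dY) Z) \<le> ereal r}"
  have MXY: "Metric_space (MX \<times> MY) (max_dist dX dY)"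
    using Metric_space_max_dist[OF assms] .
  have "Cov1 MX dX (fst ` Z) \<le> Cov1 (MX \<times> MY) (max_dist dX dY) Z"
    by (rule Cov1_image_nonexpansive[OF MXY assms(1) nonexpansive_fst_max_dist])
  then have "TO TYPE('q) MX dX (fst ` Z) \<le> TO_fun TYPE('q) MX dX r"
    using Z unfolding TO_fun_def
    by (intro SUP_upper) (auto intro: order_trans[OF iffD2[OF ereal_of_enat_le_iff]])
  moreover
  have "Cov1 MY dY (snd ` Z) \<le> Cov1 (MX \<times> MY) (max_dist dX dY) Z"
    by (rule Cov1_image_nonexpansive[OF MXY assms(2) nonexpansive_snd_max_dist])
  then have "TO TYPE('q') MY dY (snd ` Z) \<le> TO_fun TYPE('q') MY dY r"
    using Z unfolding TO_fun_def
    by (intro SUP_upper) (auto intro: order_trans[OF iffD2[OF ereal_of_enat_le_iff]])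
  ultimately have "TO TYPE('q) MX dX (fst ` Z) * TO TYPE('q') MY dY (snd ` Z)
      \<le> TO_fun TYPE('q) MX dX r * TO_fun TYPE('q') MY dY r"
    by (rule mult_mono) simp_all
  with TO_max_dist_le[OF assms]
  show "TO TYPE('q + 'q') (MX \<times> MY) (max_dist dX dY) Z
      \<le> TO_fun TYPE('q) MX dX r * TO_fun TYPE('q') MY dY r"
    by (rule order_trans)
qed

lemma lesssim_if_le: "(\<And>r. f r \<le> g r) \<Longrightarrow> lesssim f g"
  unfolding lesssim_def
proof (intro exI[of _ 1] conjI allI)
  fix r
  assume "\<And>r. f r \<le> g r"
  moreover have "g r \<le> g r + 1"
    by (cases "g r") auto
  ultimately show "f r \<le> ereal 1 * g (1 * r) + ereal 1"
    by (simp add: one_ereal_def[symmetric]) (meson order_trans)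
qed simp

theorem theorem1p8:
  fixes MX :: "'a set" and dX :: "'a \<Rightarrow> 'a \<Rightarrow> real"
    and MY :: "'b set" and dY :: "'b \<Rightarrow> 'b \<Rightarrow> real"
  assumes "Metric_space MX dX" and "Metric_space MY dY"
    and "bounded_geometry MX dX" and "bounded_geometry MY dY"
  shows "lesssim
     (\<lambda>r. ereal_of_enat (TO_fun TYPE('q::finite + 'q'::finite) (MX \<times> MY) (max_dist dX dY) r))
     (\<lambda>r. ereal_of_enat (TO_fun TYPE('q) MX dX r) * ereal_of_enat (TO_fun TYPE('q') MY dY r))"
  using TO_fun_max_dist_le[OF assms(1,2)]
  by (intro lesssim_if_le) (simp flip: ereal_of_enat_mult)

end
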